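(* Let $\mathcal{C}$ be a monoidal category and $\mathcal{D}$ a non-strict monoidal category, let $F,G:\mathcal{C}\to\mathcal{D}$ be strong monoidal functors and let $\widehat{F},\widehat{G}:\mathcal{C}_q\to\mathcal{D}$ be the unique strict monoidal functors with $\widehat{F}\circ j=F$ and $\widehat{G}\circ j=G$. For every monoidal natural transformation $\alpha:F\Rightarrow G$ there exists a unique monoidal natural transformation $\widehat{\alpha}:\widehat{F}\Rightarrow\widehat{G}$ such that $\widehat{\alpha}\, j=\alpha$ (i.e. $\widehat{\alpha}_{((X),\bullet)}=\alpha_X$ for all $X$).
   Context: $\mathrm{Mag}(\bullet)$ is the free unital magma on one generator $\bullet$; $|t|$ is the number of bullets. Non-strictification $\mathcal{C}_q$ of $(\mathcal{C},\otimes,\mathbf{1},a,\ell,r)$: objects are pairs $(S,t)$, $S$ a finite sequence of objects of $\mathcal{C}$, $t\in\mathrm{Mag}(\bullet)$, $|t|=$ length of $S$. $\mathrm{Par}(\emptyset,\emptyset)=\mathbf{1}$, $\mathrm{Par}((X),\bullet)=X$, and for $|t|>1$, $t=t_1t_2$ uniquely with $|t_k|\ge1$, $S=S_1*S_2$ with $S_k$ of length $|t_k|$, $\mathrm{Par}(S,t)=\mathrm{Par}(S_1,t_1)\otimes\mathrm{Par}(S_2,t_2)$. $\mathrm{Hom}_{\mathcal{C}_q}((S,t),(S',t'))=\mathrm{Hom}_{\mathcal{C}}(\mathrm{Par}(S,t),\mathrm{Par}(S',t'))$. Monoidal structure: $(S,t)*(S',t')=(S*S',tt')$, unit $(\emptyset,\emptyset)$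 (strict), $f*g:=f\otimes g$ for nonempty factors, identity unit constraints, associativity constraint $a_q$ with $\mathrm{Par}(a_q)=a_{\mathrm{Par}(S,t),\mathrm{Par}(S',t'),\mathrm{Par}(S'',t'')}$. The embedding $j(X)=((X),\bullet)$ is strong monoidal with constraints corresponding to identities. A natural transformation $\alpha:F\Rightarrow G$ between monoidal functors $(F,\gamma,u)$, $(G,\gamma',u')$ is monoidal if $\alpha_{\mathbf{1}}\circ u=u'$ and $\alpha_{X\otimes Y}\circ\gamma_{X,Y}=\gamma'_{X,Y}\circ(\alpha_X\boxtimes\alpha_Y)$. *)

theory Defs
  imports Main
begin

record ('o, 'm) cat =
  cObj :: "'o set"
  cArr :: "'m set"
  cdom :: "'m \<Rightarrow> 'o"
  ccod :: "'m \<Rightarrow> 'o"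
  ccomp :: "'m \<Rightarrow> 'm \<Rightarrow> 'm"   (* ccomp C g f = g \<circ> f *)
  cid :: "'o \<Rightarrow> 'm"

record ('o, 'm) moncat = "('o, 'm) cat" +
  tensO :: "'o \<Rightarrow> 'o \<Rightarrow> 'o"
  tensA :: "'m \<Rightarrow> 'm \<Rightarrow> 'm"
  munit :: "'o"
  massoc :: "'o \<Rightarrow> 'o \<Rightarrow> 'o \<Rightarrow> 'm"
  mlunit :: "'o \<Rightarrow> 'm"
  mrunit :: "'o \<Rightarrow> 'm"

definition hom :: "('o, 'm, 'z) cat_scheme \<Rightarrow> 'o \<Rightarrow> 'o \<Rightarrow> 'm set" where
  "hom C X Y = {f \<in> cArr C. cdom C f = X \<and> ccod C f = Y}"

definition category :: "('o, 'm, 'z) cat_scheme \<Rightarrow> bool" where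
  "category C \<longleftrightarrow>
     (\<forall>f \<in> cArr C. cdom C f \<in> cObj C \<and> ccod C f \<in> cObj C) \<and>
     (\<forall>X \<in> cObj C. cid C X \<in> hom C X X) \<and>
     (\<forall>f \<in> cArr C. \<forall>g \<in> cArr C. ccod C f = cdom C g \<longrightarrow>
        ccomp C g f \<in> hom C (cdom C f) (ccod C g)) \<and>
     (\<forall>f \<in> cArr C. ccomp C f (cid C (cdom C f)) = f \<and> ccomp C (cid C (ccod C f)) f = f) \<and>
     (\<forall>f \<in> cArr C. \<forall>g \<in> cArr C. \<forall>h \<in> cArr C.
        ccod C f = cdom C g \<longrightarrow> ccod C g = cdom C h \<longrightarrow>
        ccomp C h (ccomp C g f) = ccomp C (ccomp C h g) f)"

definition iso :: "('o, 'm, 'z) cat_scheme \<Rightarrow> 'm \<Rightarrow> bool" where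
  "iso C f \<longleftrightarrow> f \<in> cArr C \<and>
     (\<exists>g \<in> hom C (ccod C f) (cdom C f).
        ccomp C g f = cid C (cdom C f) \<and> ccomp C f g = cid C (ccod C f))"

definition inv_arr :: "('o, 'm, 'z) cat_scheme \<Rightarrow> 'm \<Rightarrow> 'm" where
  "inv_arr C f = (SOME g. g \<in> hom C (ccod C f) (cdom C f) \<and>
        ccomp C g f = cid C (cdom C f) \<and> ccomp C f g = cid C (ccod C f))"

definition monoidal_category :: "('o, 'm, 'z) moncat_scheme \<Rightarrow> bool" where
  "monoidal_category C \<longleftrightarrow> category C \<and>
     \<comment> \<open>tensor is a bifunctor\<close>
     (\<forall>X \<in> cObj C. \<forall>Y \<in> cObj C. tensO C X Y \<in> cObj C) \<and>
     (\<forall>f \<in> cArr C. \<forall>g \<in> cArr C.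
        tensA C f g \<in> hom C (tensO C (cdom C f) (cdom C g)) (tensO C (ccod C f) (ccod C g))) \<and>
     (\<forall>X \<in> cObj C. \<forall>Y \<in> cObj C. tensA C (cid C X) (cid C Y) = cid C (tensO C X Y)) \<and>
     (\<forall>f \<in> cArr C. \<forall>g \<in> cArr C. \<forall>f' \<in> cArr C. \<forall>g' \<in> cArr C.
        ccod C f = cdom C g \<longrightarrow> ccod C f' = cdom C g' \<longrightarrow>
        tensA C (ccomp C g f) (ccomp C g' f') = ccomp C (tensA C g g') (tensA C f f')) \<and>
     \<comment> \<open>unit and constraints\<close>
     munit C \<in> cObj C \<and>
     (\<forall>X \<in> cObj C. \<forall>Y \<in> cObj C. \<forall>Z \<in> cObj C.
        massoc C X Y Z \<in> hom C (tensO C (tensO C X Y) Z) (tensO C X (tensO C Y Z)) \<and>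
        iso C (massoc C X Y Z)) \<and>
     (\<forall>X \<in> cObj C. mlunit C X \<in> hom C (tensO C (munit C) X) X \<and> iso C (mlunit C X)) \<and>
     (\<forall>X \<in> cObj C. mrunit C X \<in> hom C (tensO C X (munit C)) X \<and> iso C (mrunit C X)) \<and>
     \<comment> \<open>naturality\<close>
     (\<forall>f \<in> cArr C. \<forall>g \<in> cArr C. \<forall>h \<in> cArr C.
        ccomp C (tensA C f (tensA C g h)) (massoc C (cdom C f) (cdom C g) (cdom C h)) =
        ccomp C (massoc C (ccod C f) (ccod C g) (ccod C h)) (tensA C (tensA C f g) h)) \<and>
     (\<forall>f \<in> cArr C. ccomp C f (mlunit C (cdom C f)) =
        ccomp C (mlunit C (ccod C f)) (tensA C (cid C (munit C)) f)) \<and>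
     (\<forall>f \<in> cArr C. ccomp C f (mrunit C (cdom C f)) =
        ccomp C (mrunit C (ccod C f)) (tensA C f (cid C (munit C)))) \<and>
     \<comment> \<open>pentagon\<close>
     (\<forall>W \<in> cObj C. \<forall>X \<in> cObj C. \<forall>Y \<in> cObj C. \<forall>Z \<in> cObj C.
        ccomp C (massoc C W X (tensO C Y Z)) (massoc C (tensO C W X) Y Z) =
        ccomp C (tensA C (cid C W) (massoc C X Y Z))
          (ccomp C (massoc C W (tensO C X Y) Z) (tensA C (massoc C W X Y) (cid C Z)))) \<and>
     \<comment> \<open>triangle\<close>
     (\<forall>X \<in> cObj C. \<forall>Y \<in> cObj C.
        ccomp C (tensA C (cid C X) (mlunit C Y)) (massoc C X (munit C) Y) =
        tensA C (mrunit C X) (cid C Y))"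

text \<open>A non-strict monoidal category: a monoidal category whose unit is strict
  (unit constraints are identities), while the associativity constraint is arbitrary.\<close>
definition nonstrict_monoidal_category :: "('o, 'm, 'z) moncat_scheme \<Rightarrow> bool" where
  "nonstrict_monoidal_category C \<longleftrightarrow> monoidal_category C \<and>
     (\<forall>X \<in> cObj C. tensO C (munit C) X = X \<and> tensO C X (munit C) = X \<and>
        mlunit C X = cid C X \<and> mrunit C X = cid C X)"

definition is_functor :: "('o, 'm, 'z) cat_scheme \<Rightarrow> ('p, 'n, 'y) cat_scheme \<Rightarrow>
    ('o \<Rightarrow> 'p) \<Rightarrow> ('m \<Rightarrow> 'n) \<Rightarrow> bool" where
  "is_functor C D Fo Fa \<longleftrightarrow>
     (\<forall>X \<in> cObj C. Fo X \<in> cObj D) \<and>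
     (\<forall>f \<in> cArr C. Fa f \<in> hom D (Fo (cdom C f)) (Fo (ccod C f))) \<and>
     (\<forall>X \<in> cObj C. Fa (cid C X) = cid D (Fo X)) \<and>
     (\<forall>f \<in> cArr C. \<forall>g \<in> cArr C. ccod C f = cdom C g \<longrightarrow>
        Fa (ccomp C g f) = ccomp D (Fa g) (Fa f))"

definition monoidal_functor :: "('o, 'm, 'z) moncat_scheme \<Rightarrow> ('p, 'n, 'y) moncat_scheme \<Rightarrow>
    ('o \<Rightarrow> 'p) \<Rightarrow> ('m \<Rightarrow> 'n) \<Rightarrow> ('o \<Rightarrow> 'o \<Rightarrow> 'n) \<Rightarrow> 'n \<Rightarrow> bool" where
  "monoidal_functor C D Fo Fa \<gamma> u \<longleftrightarrow> is_functor C D Fo Fa \<and>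
     (\<forall>X \<in> cObj C. \<forall>Y \<in> cObj C. \<gamma> X Y \<in> hom D (tensO D (Fo X) (Fo Y)) (Fo (tensO C X Y))) \<and>
     u \<in> hom D (munit D) (Fo (munit C)) \<and>
     (\<forall>f \<in> cArr C. \<forall>g \<in> cArr C.
        ccomp D (Fa (tensA C f g)) (\<gamma> (cdom C f) (cdom C g)) =
        ccomp D (\<gamma> (ccod C f) (ccod C g)) (tensA D (Fa f) (Fa g))) \<and>
     (\<forall>X \<in> cObj C. \<forall>Y \<in> cObj C. \<forall>Z \<in> cObj C.
        ccomp D (Fa (massoc C X Y Z))
          (ccomp D (\<gamma> (tensO C X Y) Z) (tensA D (\<gamma> X Y) (cid D (Fo Z)))) =
        ccomp D (\<gamma> X (tensO C Y Z))
          (ccomp D (tensA D (cid D (Fo X)) (\<gamma> Y Z)) (massoc D (Fo X) (Fo Y) (Fo Z)))) \<and>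
     (\<forall>X \<in> cObj C.
        ccomp D (Fa (mlunit C X)) (ccomp D (\<gamma> (munit C) X) (tensA D u (cid D (Fo X))))
          = mlunit D (Fo X)) \<and>
     (\<forall>X \<in> cObj C.
        ccomp D (Fa (mrunit C X)) (ccomp D (\<gamma> X (munit C)) (tensA D (cid D (Fo X)) u))
          = mrunit D (Fo X))"

definition strong_monoidal_functor :: "('o, 'm, 'z) moncat_scheme \<Rightarrow> ('p, 'n, 'y) moncat_scheme \<Rightarrow>
    ('o \<Rightarrow> 'p) \<Rightarrow> ('m \<Rightarrow> 'n) \<Rightarrow> ('o \<Rightarrow> 'o \<Rightarrow> 'n) \<Rightarrow> 'n \<Rightarrow> bool" where
  "strong_monoidal_functor C D Fo Fa \<gamma> u \<longleftrightarrow> monoidal_functor C D Fo Fa \<gamma> u \<and>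
     (\<forall>X \<in> cObj C. \<forall>Y \<in> cObj C. iso D (\<gamma> X Y)) \<and> iso D u"

definition strict_monoidal_functor :: "('o, 'm, 'z) moncat_scheme \<Rightarrow> ('p, 'n, 'y) moncat_scheme \<Rightarrow>
    ('o \<Rightarrow> 'p) \<Rightarrow> ('m \<Rightarrow> 'n) \<Rightarrow> ('o \<Rightarrow> 'o \<Rightarrow> 'n) \<Rightarrow> 'n \<Rightarrow> bool" where
  "strict_monoidal_functor C D Fo Fa \<gamma> u \<longleftrightarrow> monoidal_functor C D Fo Fa \<gamma> u \<and>
     (\<forall>X \<in> cObj C. \<forall>Y \<in> cObj C. \<gamma> X Y = cid D (tensO D (Fo X) (Fo Y))) \<and>
     u = cid D (munit D)"

definition nat_trans :: "('o, 'm, 'z) cat_scheme \<Rightarrow> ('p, 'n, 'y) cat_scheme \<Rightarrow>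
    ('o \<Rightarrow> 'p) \<Rightarrow> ('m \<Rightarrow> 'n) \<Rightarrow> ('o \<Rightarrow> 'p) \<Rightarrow> ('m \<Rightarrow> 'n) \<Rightarrow> ('o \<Rightarrow> 'n) \<Rightarrow> bool" where
  "nat_trans C D Fo Fa Go Ga \<alpha> \<longleftrightarrow>
     (\<forall>X \<in> cObj C. \<alpha> X \<in> hom D (Fo X) (Go X)) \<and>
     (\<forall>f \<in> cArr C. ccomp D (\<alpha> (ccod C f)) (Fa f) = ccomp D (Ga f) (\<alpha> (cdom C f)))"

definition monoidal_nat_trans :: "('o, 'm, 'z) moncat_scheme \<Rightarrow> ('p, 'n, 'y) moncat_scheme \<Rightarrow>
    ('o \<Rightarrow> 'p) \<Rightarrow> ('m \<Rightarrow> 'n) \<Rightarrow> ('o \<Rightarrow> 'o \<Rightarrow> 'n) \<Rightarrow> 'n \<Rightarrow>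
    ('o \<Rightarrow> 'p) \<Rightarrow> ('m \<Rightarrow> 'n) \<Rightarrow> ('o \<Rightarrow> 'o \<Rightarrow> 'n) \<Rightarrow> 'n \<Rightarrow> ('o \<Rightarrow> 'n) \<Rightarrow> bool" where
  "monoidal_nat_trans C D Fo Fa \<gamma> u Go Ga \<gamma>' u' \<alpha> \<longleftrightarrow>
     nat_trans C D Fo Fa Go Ga \<alpha> \<and>
     ccomp D (\<alpha> (munit C)) u = u' \<and>
     (\<forall>X \<in> cObj C. \<forall>Y \<in> cObj C.
        ccomp D (\<alpha> (tensO C X Y)) (\<gamma> X Y) = ccomp D (\<gamma>' X Y) (tensA D (\<alpha> X) (\<alpha> Y)))"

text \<open>Elements: the unit MU, the generator MB (bullet), and products MN t1 t2 of two
  non-unit elements (well-formedness mwf).\<close>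
datatype mag = MU | MB | MN mag mag

fun msize :: "mag \<Rightarrow> nat" where
  "msize MU = 0"
| "msize MB = 1"
| "msize (MN a b) = msize a + msize b"

fun mwf :: "mag \<Rightarrow> bool" where
  "mwf MU = True"
| "mwf MB = True"
| "mwf (MN a b) = (a \<noteq> MU \<and> b \<noteq> MU \<and> mwf a \<and> mwf b)"

definition mmul :: "mag \<Rightarrow> mag \<Rightarrow> mag" where
  "mmul a b = (if a = MU then b else if b = MU then a else MN a b)"

fun par :: "('o, 'm, 'z) moncat_scheme \<Rightarrow> mag \<Rightarrow> 'o list \<Rightarrow> 'o" where
  "par C MU S = munit C"
| "par C MB S = hd S"
| "par C (MN t1 t2) S = tensO C (par C t1 (take (msize t1) S)) (par C t2 (drop (msize t1) S))"

type_synonym 'o qobj = "'o list \<times> mag"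
type_synonym ('o, 'm) qarr = "'o qobj \<times> 'o qobj \<times> 'm"

definition Par :: "('o, 'm, 'z) moncat_scheme \<Rightarrow> 'o qobj \<Rightarrow> 'o" where
  "Par C A = par C (snd A) (fst A)"

definition qObj :: "('o, 'm, 'z) moncat_scheme \<Rightarrow> 'o qobj set" where
  "qObj C = {(S, t). mwf t \<and> msize t = length S \<and> set S \<subseteq> cObj C}"

definition qtensO :: "'o qobj \<Rightarrow> 'o qobj \<Rightarrow> 'o qobj" where
  "qtensO A B = (fst A @ fst B, mmul (snd A) (snd B))"

definition qphi :: "('o, 'm, 'z) moncat_scheme \<Rightarrow> 'o qobj \<Rightarrow> 'o qobj \<Rightarrow> 'm" where
  "qphi C A B = (if snd A = MU then mlunit C (Par C B)
                 else if snd B = MU then mrunit C (Par C A)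
                 else cid C (tensO C (Par C A) (Par C B)))"

definition qcat :: "('o, 'm, 'z) moncat_scheme \<Rightarrow> ('o qobj, ('o, 'm) qarr) moncat" where
  "qcat C = \<lparr>
     cObj = qObj C,
     cArr = {(A, B, f). A \<in> qObj C \<and> B \<in> qObj C \<and> f \<in> hom C (Par C A) (Par C B)},
     cdom = (\<lambda>(A, B, f). A),
     ccod = (\<lambda>(A, B, f). B),
     ccomp = (\<lambda>(B', C', g) (A, B, f). (A, C', ccomp C g f)),
     cid = (\<lambda>A. (A, A, cid C (Par C A))),
     tensO = qtensO,
     tensA = (\<lambda>(A, B, f) (A', B', g). (qtensO A A', qtensO B B',
                ccomp C (qphi C B B') (ccomp C (tensA C f g) (inv_arr C (qphi C A A'))))),
     munit = ([], MU),
     massoc = (\<lambda>A B E. (qtensO (qtensO A B) E, qtensO A (qtensO B E),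
                if snd A \<noteq> MU \<and> snd B \<noteq> MU \<and> snd E \<noteq> MU
                then massoc C (Par C A) (Par C B) (Par C E)
                else cid C (Par C (qtensO A (qtensO B E))))),
     mlunit = (\<lambda>A. (A, A, cid C (Par C A))),
     mrunit = (\<lambda>A. (A, A, cid C (Par C A)))
   \<rparr>"

definition jO :: "'o \<Rightarrow> 'o qobj" where
  "jO X = ([X], MB)"

definition jA :: "('o, 'm, 'z) moncat_scheme \<Rightarrow> 'm \<Rightarrow> ('o, 'm) qarr" where
  "jA C f = (jO (cdom C f), jO (ccod C f), f)"

definition j\<gamma> :: "('o, 'm, 'z) moncat_scheme \<Rightarrow> 'o \<Rightarrow> 'o \<Rightarrow> ('o, 'm) qarr" where
  "j\<gamma> C X Y = (qtensO (jO X) (jO Y), jO (tensO C X Y), cid C (tensO C X Y))"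

definition ju :: "('o, 'm, 'z) moncat_scheme \<Rightarrow> ('o, 'm) qarr" where
  "ju C = (([], MU), jO (munit C), cid C (munit C))"

text \<open>Equality of monoidal functors Fh \<circ> j = F (object and arrow maps and both
  structure constraints, the composite constraints being the usual ones).\<close>
definition extends_along_j :: "('o, 'm, 'z) moncat_scheme \<Rightarrow> ('p, 'n, 'y) moncat_scheme \<Rightarrow>
    ('o qobj \<Rightarrow> 'p) \<Rightarrow> (('o, 'm) qarr \<Rightarrow> 'n) \<Rightarrow> ('o qobj \<Rightarrow> 'o qobj \<Rightarrow> 'n) \<Rightarrow> 'n \<Rightarrow>
    ('o \<Rightarrow> 'p) \<Rightarrow> ('m \<Rightarrow> 'n) \<Rightarrow> ('o \<Rightarrow> 'o \<Rightarrow> 'n) \<Rightarrow> 'n \<Rightarrow> bool" where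
  "extends_along_j C D Fho Fha Fh\<gamma> Fhu Fo Fa F\<gamma> Fu \<longleftrightarrow>
     (\<forall>X \<in> cObj C. Fho (jO X) = Fo X) \<and>
     (\<forall>f \<in> cArr C. Fha (jA C f) = Fa f) \<and>
     (\<forall>X \<in> cObj C. \<forall>Y \<in> cObj C.
        ccomp D (Fha (j\<gamma> C X Y)) (Fh\<gamma> (jO X) (jO Y)) = F\<gamma> X Y) \<and>
     ccomp D (Fha (ju C)) Fhu = Fu"

end

theory Submission
  imports Defs
begin

text \<open>
  A monoidal transformation between strict monoidal functors sends the unit object to an
  identity and a tensor product to the tensor of its components. So the lift of \<alpha> must
  be, at an object (S, t), the tensor of the components of \<alpha> at the entries of S
  bracketed along t; this proves uniqueness and gives the candidate, which is
  multiplicative because the unit of D is strict.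

  For naturality of the candidate, every object A of the non-strictification is joined to
  j (Par A) by a canonical isomorphism whose underlying arrow is the identity of Par A, and
  every arrow (A, B, h) factors as that isomorphism for A, then j h, then the inverse of
  the one for B. The canonical isomorphisms are built by tensoring from the structure
  arrows of j, and naturality at j h and at these structure arrows is exactly naturality
  and monoidality of \<alpha>, because the lifted functors restrict to F and G along j as
  monoidal functors. Naturality squares are closed under composition, inverses and
  tensor products, which finishes the proof.
\<close>

section \<open>Categories and monoidal categories\<close>

lemma in_homD: "f \<in> hom C X Y \<Longrightarrow> f \<in> cArr C \<and> cdom C f = X \<and> ccod C f = Y"
  by (simp add: hom_def)

lemma id_in_hom: "category C \<Longrightarrow> X \<in> cObj C \<Longrightarrow> cid C X \<in> hom C X X"
  by (simp add: category_def)

lemma hom_objs: "category C \<Longrightarrow> f \<in> hom C X Y \<Longrightarrow> X \<in> cObj C \<and> Y \<in> cObj C"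
  by (auto simp: category_def hom_def)

lemma comp_in_hom:
  "category C \<Longrightarrow> f \<in> hom C X Y \<Longrightarrow> g \<in> hom C Y Z \<Longrightarrow> ccomp C g f \<in> hom C X Z"
  by (auto simp: category_def hom_def)

lemma comp_id_left: "category C \<Longrightarrow> f \<in> hom C X Y \<Longrightarrow> ccomp C (cid C Y) f = f"
  by (auto simp: category_def hom_def)

lemma comp_id_right: "category C \<Longrightarrow> f \<in> hom C X Y \<Longrightarrow> ccomp C f (cid C X) = f"
  by (auto simp: category_def hom_def)

lemma comp_assoc:
  "category C \<Longrightarrow> f \<in> hom C X Y \<Longrightarrow> g \<in> hom C Y Z \<Longrightarrow> h \<in> hom C Z W \<Longrightarrow>
   ccomp C h (ccomp C g f) = ccomp C (ccomp C h g) f"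
  by (auto simp: category_def hom_def)

lemma inv_arr_id:
  assumes C: "category C" and X: "X \<in> cObj C"
  shows "inv_arr C (cid C X) = cid C X"
proof -
  have idX: "cid C X \<in> hom C X X"
    using id_in_hom[OF C X] .
  then have dom_cod: "cdom C (cid C X) = X" "ccod C (cid C X) = X"
    by (simp_all add: hom_def)
  show ?thesis
    unfolding inv_arr_def dom_cod
  proof (rule some_equality)
    show "cid C X \<in> hom C X X \<and> ccomp C (cid C X) (cid C X) = cid C X \<and>
        ccomp C (cid C X) (cid C X) = cid C X"
      using idX comp_id_left[OF C idX] by simp
  next
    fix g
    assume "g \<in> hom C X X \<and> ccomp C g (cid C X) = cid C X \<and> ccomp C (cid C X) g = cid C X"
    then show "g = cid C X"
      using comp_id_right[OF C] by metis
  qed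
qed

lemma monoidal_category_category: "monoidal_category C \<Longrightarrow> category C"
  by (simp add: monoidal_category_def)

lemma tensO_in_obj:
  "monoidal_category C \<Longrightarrow> X \<in> cObj C \<Longrightarrow> Y \<in> cObj C \<Longrightarrow> tensO C X Y \<in> cObj C"
  by (simp add: monoidal_category_def)

lemma munit_in_obj: "monoidal_category C \<Longrightarrow> munit C \<in> cObj C"
  by (simp add: monoidal_category_def)

lemma tensA_in_hom:
  "monoidal_category C \<Longrightarrow> f \<in> hom C X Y \<Longrightarrow> g \<in> hom C X' Y' \<Longrightarrow>
   tensA C f g \<in> hom C (tensO C X X') (tensO C Y Y')"
  unfolding monoidal_category_def by (auto simp: hom_def)

lemma tensA_id:
  "monoidal_category C \<Longrightarrow> X \<in> cObj C \<Longrightarrow> Y \<in> cObj C \<Longrightarrow>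
   tensA C (cid C X) (cid C Y) = cid C (tensO C X Y)"
  by (simp add: monoidal_category_def)

lemma tensA_comp:
  "monoidal_category C \<Longrightarrow> f \<in> hom C X Y \<Longrightarrow> g \<in> hom C Y Z \<Longrightarrow>
   f' \<in> hom C X' Y' \<Longrightarrow> g' \<in> hom C Y' Z' \<Longrightarrow>
   tensA C (ccomp C g f) (ccomp C g' f') = ccomp C (tensA C g g') (tensA C f f')"
  unfolding monoidal_category_def by (auto simp: hom_def)

lemma nonstrict_tensA_unit_left:
  assumes D: "nonstrict_monoidal_category D" and f: "f \<in> hom D X Y"
  shows "tensA D (cid D (munit D)) f = f"
proof -
  have mD: "monoidal_category D"
    using D unfolding nonstrict_monoidal_category_def by blast
  then have cD: "category D"
    by (rule monoidal_category_category)
  have "X \<in> cObj D" "Y \<in> cObj D"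
    using hom_objs[OF cD f] by auto
  then have unit: "tensO D (munit D) X = X" "tensO D (munit D) Y = Y"
      "mlunit D X = cid D X" "mlunit D Y = cid D Y"
    using D by (auto simp: nonstrict_monoidal_category_def)
  have "tensA D (cid D (munit D)) f \<in> hom D X Y"
    using tensA_in_hom[OF mD id_in_hom[OF cD munit_in_obj[OF mD]] f] unit by simp
  moreover have "ccomp D f (mlunit D X) = ccomp D (mlunit D Y) (tensA D (cid D (munit D)) f)"
    using mD f unfolding monoidal_category_def hom_def by blast
  ultimately show ?thesis
    using unit comp_id_left[OF cD] comp_id_right[OF cD f] by metis
qed

lemma nonstrict_tensA_unit_right:
  assumes D: "nonstrict_monoidal_category D" and f: "f \<in> hom D X Y"
  shows "tensA D f (cid D (munit D)) = f"
proof -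
  have mD: "monoidal_category D"
    using D unfolding nonstrict_monoidal_category_def by blast
  then have cD: "category D"
    by (rule monoidal_category_category)
  have "X \<in> cObj D" "Y \<in> cObj D"
    using hom_objs[OF cD f] by auto
  then have unit: "tensO D X (munit D) = X" "tensO D Y (munit D) = Y"
      "mrunit D X = cid D X" "mrunit D Y = cid D Y"
    using D by (auto simp: nonstrict_monoidal_category_def)
  have "tensA D f (cid D (munit D)) \<in> hom D X Y"
    using tensA_in_hom[OF mD f id_in_hom[OF cD munit_in_obj[OF mD]]] unit by simp
  moreover have "ccomp D f (mrunit D X) = ccomp D (mrunit D Y) (tensA D f (cid D (munit D)))"
    using mD f unfolding monoidal_category_def hom_def by blast
  ultimately show ?thesis
    using unit comp_id_left[OF cD] comp_id_right[OF cD f] by metis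
qed

section \<open>Strict monoidal functors and naturality squares\<close>

definition natural_at :: "('o, 'm, 'z) cat_scheme \<Rightarrow> ('p, 'n, 'y) cat_scheme \<Rightarrow>
    ('m \<Rightarrow> 'n) \<Rightarrow> ('m \<Rightarrow> 'n) \<Rightarrow> ('o \<Rightarrow> 'n) \<Rightarrow> 'm \<Rightarrow> bool" where
  "natural_at C D Fa Ga \<beta> f \<longleftrightarrow>
     ccomp D (\<beta> (ccod C f)) (Fa f) = ccomp D (Ga f) (\<beta> (cdom C f))"

lemma natural_at_in_hom:
  "f \<in> hom C X Y \<Longrightarrow>
   natural_at C D Fa Ga \<beta> f \<longleftrightarrow> ccomp D (\<beta> Y) (Fa f) = ccomp D (Ga f) (\<beta> X)"
  by (simp add: natural_at_def hom_def)

locale strict_monoidal_functor_into =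
  fixes Q :: "('o, 'm, 'z) moncat_scheme" and D :: "('p, 'n, 'y) moncat_scheme"
    and Ho :: "'o \<Rightarrow> 'p" and Ha :: "'m \<Rightarrow> 'n" and H\<gamma> :: "'o \<Rightarrow> 'o \<Rightarrow> 'n" and Hu :: 'n
  assumes category_Q: "category Q"
    and monoidal_D: "monoidal_category D"
    and strict: "strict_monoidal_functor Q D Ho Ha H\<gamma> Hu"
begin

lemma category_D: "category D"
  using monoidal_D by (rule monoidal_category_category)

lemma monoidal_functor: "monoidal_functor Q D Ho Ha H\<gamma> Hu"
  using strict unfolding strict_monoidal_functor_def by blast

lemma maps_obj: "X \<in> cObj Q \<Longrightarrow> Ho X \<in> cObj D"
  using monoidal_functor by (simp add: monoidal_functor_def is_functor_def)

lemma maps_hom: "f \<in> hom Q X Y \<Longrightarrow> Ha f \<in> hom D (Ho X) (Ho Y)"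
  using monoidal_functor by (auto simp: monoidal_functor_def is_functor_def hom_def)

lemma preserves_id: "X \<in> cObj Q \<Longrightarrow> Ha (cid Q X) = cid D (Ho X)"
  using monoidal_functor by (simp add: monoidal_functor_def is_functor_def)

lemma preserves_comp:
  "f \<in> hom Q X Y \<Longrightarrow> g \<in> hom Q Y Z \<Longrightarrow> Ha (ccomp Q g f) = ccomp D (Ha g) (Ha f)"
  using monoidal_functor by (auto simp: monoidal_functor_def is_functor_def hom_def)

lemma tensor_constraint_id:
  "X \<in> cObj Q \<Longrightarrow> Y \<in> cObj Q \<Longrightarrow> H\<gamma> X Y = cid D (tensO D (Ho X) (Ho Y))"
  using strict by (simp add: strict_monoidal_functor_def)

lemma unit_constraint_id: "Hu = cid D (munit D)"
  using strict by (simp add: strict_monoidal_functor_def)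

lemma preserves_tensO:
  assumes "X \<in> cObj Q" "Y \<in> cObj Q"
  shows "Ho (tensO Q X Y) = tensO D (Ho X) (Ho Y)"
proof -
  have "H\<gamma> X Y \<in> hom D (tensO D (Ho X) (Ho Y)) (Ho (tensO Q X Y))"
    using monoidal_functor assms by (simp add: monoidal_functor_def)
  moreover have "tensO D (Ho X) (Ho Y) \<in> cObj D"
    using tensO_in_obj[OF monoidal_D] maps_obj assms by blast
  ultimately show ?thesis
    using tensor_constraint_id[OF assms] id_in_hom[OF category_D] by (simp add: hom_def)
qed

lemma preserves_munit: "Ho (munit Q) = munit D"
proof -
  have "Hu \<in> hom D (munit D) (Ho (munit Q))"
    using monoidal_functor unfolding monoidal_functor_def by blast
  then show ?thesis
    using unit_constraint_id id_in_hom[OF category_D munit_in_obj[OF monoidal_D]] by (simp add: hom_def)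
qed

lemma preserves_tensA:
  assumes f: "f \<in> hom Q X Y" and g: "g \<in> hom Q X' Y'"
    and fg: "tensA Q f g \<in> hom Q (tensO Q X X') (tensO Q Y Y')"
  shows "Ha (tensA Q f g) = tensA D (Ha f) (Ha g)"
proof -
  have objs: "X \<in> cObj Q" "Y \<in> cObj Q" "X' \<in> cObj Q" "Y' \<in> cObj Q"
    using hom_objs[OF category_Q] f g by blast+
  have "ccomp D (Ha (tensA Q f g)) (H\<gamma> X X') = ccomp D (H\<gamma> Y Y') (tensA D (Ha f) (Ha g))"
    using monoidal_functor f g unfolding monoidal_functor_def hom_def by blast
  moreover have "H\<gamma> X X' = cid D (tensO D (Ho X) (Ho X'))" "H\<gamma> Y Y' = cid D (tensO D (Ho Y) (Ho Y'))"
    using tensor_constraint_id objs by simp_all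
  moreover have "Ha (tensA Q f g) \<in> hom D (tensO D (Ho X) (Ho X')) (tensO D (Ho Y) (Ho Y'))"
    using maps_hom[OF fg] preserves_tensO objs by simp
  moreover have "tensA D (Ha f) (Ha g) \<in> hom D (tensO D (Ho X) (Ho X')) (tensO D (Ho Y) (Ho Y'))"
    using tensA_in_hom[OF monoidal_D maps_hom[OF f] maps_hom[OF g]] .
  ultimately show ?thesis
    using comp_id_left[OF category_D] comp_id_right[OF category_D] by metis
qed

end

locale strict_functor_pair =
  F: strict_monoidal_functor_into Q D Fo Fa F\<gamma> Fu + G: strict_monoidal_functor_into Q D Go Ga G\<gamma> Gu
  for Q :: "('o, 'm, 'z) moncat_scheme" and D :: "('p, 'n, 'y) moncat_scheme"
    and Fo Fa F\<gamma> Fu Go Ga G\<gamma> Gu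
begin

lemma natural_at_comp:
  assumes \<beta>: "\<And>X. X \<in> cObj Q \<Longrightarrow> \<beta> X \<in> hom D (Fo X) (Go X)"
    and f: "f \<in> hom Q X Y" and g: "g \<in> hom Q Y Z"
    and nf: "natural_at Q D Fa Ga \<beta> f" and ng: "natural_at Q D Fa Ga \<beta> g"
  shows "natural_at Q D Fa Ga \<beta> (ccomp Q g f)"
proof -
  have objs: "X \<in> cObj Q" "Y \<in> cObj Q" "Z \<in> cObj Q"
    using hom_objs[OF F.category_Q] f g by blast+
  note cD = F.category_D
  note Ff = F.maps_hom[OF f] and Fg = F.maps_hom[OF g]
  note Gf = G.maps_hom[OF f] and Gg = G.maps_hom[OF g]
  note \<beta>X = \<beta>[OF objs(1)] and \<beta>Y = \<beta>[OF objs(2)] and \<beta>Z = \<beta>[OF objs(3)]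
  have sf: "ccomp D (\<beta> Y) (Fa f) = ccomp D (Ga f) (\<beta> X)"
    using nf unfolding natural_at_in_hom[OF f] .
  have sg: "ccomp D (\<beta> Z) (Fa g) = ccomp D (Ga g) (\<beta> Y)"
    using ng unfolding natural_at_in_hom[OF g] .
  have "ccomp D (\<beta> Z) (Fa (ccomp Q g f)) = ccomp D (ccomp D (\<beta> Z) (Fa g)) (Fa f)"
    using F.preserves_comp[OF f g] comp_assoc[OF cD Ff Fg \<beta>Z] by simp
  also have "\<dots> = ccomp D (Ga g) (ccomp D (\<beta> Y) (Fa f))"
    using sg comp_assoc[OF cD Ff \<beta>Y Gg] by simp
  also have "\<dots> = ccomp D (Ga (ccomp Q g f)) (\<beta> X)"
    using sf comp_assoc[OF cD \<beta>X Gf Gg] G.preserves_comp[OF f g] by simp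
  finally show ?thesis
    unfolding natural_at_in_hom[OF comp_in_hom[OF F.category_Q f g]] .
qed

lemma natural_at_inverse:
  assumes \<beta>: "\<And>X. X \<in> cObj Q \<Longrightarrow> \<beta> X \<in> hom D (Fo X) (Go X)"
    and f: "f \<in> hom Q X Y" and g: "g \<in> hom Q Y X"
    and gf: "ccomp Q g f = cid Q X" and fg: "ccomp Q f g = cid Q Y"
    and nf: "natural_at Q D Fa Ga \<beta> f"
  shows "natural_at Q D Fa Ga \<beta> g"
proof -
  have objs: "X \<in> cObj Q" "Y \<in> cObj Q"
    using hom_objs[OF F.category_Q] f by blast+
  note cD = F.category_D
  note Ff = F.maps_hom[OF f] and Fg = F.maps_hom[OF g]
  note Gf = G.maps_hom[OF f] and Gg = G.maps_hom[OF g]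
  note \<beta>X = \<beta>[OF objs(1)] and \<beta>Y = \<beta>[OF objs(2)]
  have FF: "ccomp D (Fa f) (Fa g) = cid D (Fo Y)"
    using F.preserves_comp[OF g f] F.preserves_id[OF objs(2)] fg by simp
  have GG: "ccomp D (Ga g) (Ga f) = cid D (Go X)"
    using G.preserves_comp[OF f g] G.preserves_id[OF objs(1)] gf by simp
  have sf: "ccomp D (\<beta> Y) (Fa f) = ccomp D (Ga f) (\<beta> X)"
    using nf unfolding natural_at_in_hom[OF f] .
  have "ccomp D (\<beta> X) (Fa g) = ccomp D (ccomp D (ccomp D (Ga g) (Ga f)) (\<beta> X)) (Fa g)"
    using GG comp_id_left[OF cD \<beta>X] by simp
  also have "\<dots> = ccomp D (Ga g) (ccomp D (ccomp D (\<beta> Y) (Fa f)) (Fa g))"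
    using sf comp_assoc[OF cD \<beta>X Gf Gg]
      comp_assoc[OF cD Fg comp_in_hom[OF cD \<beta>X Gf] Gg] by simp
  also have "\<dots> = ccomp D (Ga g) (\<beta> Y)"
    using FF comp_assoc[OF cD Fg Ff \<beta>Y] comp_id_right[OF cD \<beta>Y] by simp
  finally show ?thesis
    unfolding natural_at_in_hom[OF g] .
qed

lemma natural_at_tensA:
  assumes f: "f \<in> hom Q X Y" and g: "g \<in> hom Q X' Y'"
    and fg: "tensA Q f g \<in> hom Q (tensO Q X X') (tensO Q Y Y')"
    and \<beta>X: "\<beta> X \<in> hom D (Fo X) (Go X)" and \<beta>X': "\<beta> X' \<in> hom D (Fo X') (Go X')"
    and \<beta>Y: "\<beta> Y \<in> hom D (Fo Y) (Go Y)" and \<beta>Y': "\<beta> Y' \<in> hom D (Fo Y') (Go Y')"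
    and \<beta>_dom: "\<beta> (tensO Q X X') = tensA D (\<beta> X) (\<beta> X')"
    and \<beta>_cod: "\<beta> (tensO Q Y Y') = tensA D (\<beta> Y) (\<beta> Y')"
    and nf: "natural_at Q D Fa Ga \<beta> f" and ng: "natural_at Q D Fa Ga \<beta> g"
  shows "natural_at Q D Fa Ga \<beta> (tensA Q f g)"
proof -
  note mD = F.monoidal_D
  have "ccomp D (\<beta> (tensO Q Y Y')) (Fa (tensA Q f g))
      = tensA D (ccomp D (\<beta> Y) (Fa f)) (ccomp D (\<beta> Y') (Fa g))"
    using \<beta>_cod F.preserves_tensA[OF f g fg]
      tensA_comp[OF mD F.maps_hom[OF f] \<beta>Y F.maps_hom[OF g] \<beta>Y'] by simp
  also have "\<dots> = tensA D (ccomp D (Ga f) (\<beta> X)) (ccomp D (Ga g) (\<beta> X'))"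
    using nf ng unfolding natural_at_in_hom[OF f] natural_at_in_hom[OF g] by simp
  also have "\<dots> = ccomp D (Ga (tensA Q f g)) (\<beta> (tensO Q X X'))"
    using \<beta>_dom G.preserves_tensA[OF f g fg]
      tensA_comp[OF mD \<beta>X G.maps_hom[OF f] \<beta>X' G.maps_hom[OF g]] by simp
  finally show ?thesis
    unfolding natural_at_in_hom[OF fg] .
qed

lemma monoidal_nat_trans_tensO:
  assumes \<beta>: "monoidal_nat_trans Q D Fo Fa F\<gamma> Fu Go Ga G\<gamma> Gu \<beta>"
    and X: "X \<in> cObj Q" and Y: "Y \<in> cObj Q" and XY: "tensO Q X Y \<in> cObj Q"
  shows "\<beta> (tensO Q X Y) = tensA D (\<beta> X) (\<beta> Y)"
proof -
  note cD = F.category_D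
  have "\<beta> (tensO Q X Y) \<in> hom D (Fo (tensO Q X Y)) (Go (tensO Q X Y))"
    using \<beta> XY unfolding monoidal_nat_trans_def nat_trans_def by blast
  then have \<beta>XY: "\<beta> (tensO Q X Y) \<in> hom D (tensO D (Fo X) (Fo Y)) (tensO D (Go X) (Go Y))"
    using F.preserves_tensO[OF X Y] G.preserves_tensO[OF X Y] by simp
  have "\<beta> X \<in> hom D (Fo X) (Go X)" "\<beta> Y \<in> hom D (Fo Y) (Go Y)"
    using \<beta> X Y unfolding monoidal_nat_trans_def nat_trans_def by blast+
  then have \<beta>X\<beta>Y: "tensA D (\<beta> X) (\<beta> Y) \<in> hom D (tensO D (Fo X) (Fo Y)) (tensO D (Go X) (Go Y))"
    using tensA_in_hom[OF F.monoidal_D] by blast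
  have "ccomp D (\<beta> (tensO Q X Y)) (F\<gamma> X Y) = ccomp D (G\<gamma> X Y) (tensA D (\<beta> X) (\<beta> Y))"
    using \<beta> X Y unfolding monoidal_nat_trans_def by blast
  then show ?thesis
    using F.tensor_constraint_id[OF X Y] G.tensor_constraint_id[OF X Y]
      comp_id_right[OF cD \<beta>XY] comp_id_left[OF cD \<beta>X\<beta>Y] by simp
qed

lemma monoidal_nat_trans_munit:
  assumes \<beta>: "monoidal_nat_trans Q D Fo Fa F\<gamma> Fu Go Ga G\<gamma> Gu \<beta>" and I: "munit Q \<in> cObj Q"
  shows "\<beta> (munit Q) = cid D (munit D)"
proof -
  have "\<beta> (munit Q) \<in> hom D (munit D) (munit D)"
    using \<beta> I F.preserves_munit G.preserves_munit
    unfolding monoidal_nat_trans_def nat_trans_def by metis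
  moreover have "ccomp D (\<beta> (munit Q)) Fu = Gu"
    using \<beta> unfolding monoidal_nat_trans_def by blast
  ultimately show ?thesis
    using F.unit_constraint_id G.unit_constraint_id comp_id_right[OF F.category_D] by metis
qed

lemma monoidal_nat_transI:
  assumes hom: "\<And>X. X \<in> cObj Q \<Longrightarrow> \<beta> X \<in> hom D (Fo X) (Go X)"
    and natural: "\<And>f. f \<in> cArr Q \<Longrightarrow> natural_at Q D Fa Ga \<beta> f"
    and tensO: "\<And>X Y. X \<in> cObj Q \<Longrightarrow> Y \<in> cObj Q \<Longrightarrow> \<beta> (tensO Q X Y) = tensA D (\<beta> X) (\<beta> Y)"
    and munit: "\<beta> (munit Q) = cid D (munit D)"
  shows "monoidal_nat_trans Q D Fo Fa F\<gamma> Fu Go Ga G\<gamma> Gu \<beta>"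
  unfolding monoidal_nat_trans_def nat_trans_def
proof (intro conjI ballI)
  fix X assume "X \<in> cObj Q"
  then show "\<beta> X \<in> hom D (Fo X) (Go X)"
    by (rule hom)
next
  fix f assume "f \<in> cArr Q"
  then show "ccomp D (\<beta> (ccod Q f)) (Fa f) = ccomp D (Ga f) (\<beta> (cdom Q f))"
    using natural unfolding natural_at_def by blast
next
  show "ccomp D (\<beta> (munit Q)) Fu = Gu"
    using munit F.unit_constraint_id G.unit_constraint_id
      comp_id_left[OF F.category_D id_in_hom[OF F.category_D munit_in_obj[OF F.monoidal_D]]]
    by simp
next
  fix X Y assume X: "X \<in> cObj Q" and Y: "Y \<in> cObj Q"
  have "tensA D (\<beta> X) (\<beta> Y) \<in> hom D (tensO D (Fo X) (Fo Y)) (tensO D (Go X) (Go Y))"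
    using tensA_in_hom[OF F.monoidal_D hom[OF X] hom[OF Y]] .
  then show "ccomp D (\<beta> (tensO Q X Y)) (F\<gamma> X Y) = ccomp D (G\<gamma> X Y) (tensA D (\<beta> X) (\<beta> Y))"
    using tensO[OF X Y] F.tensor_constraint_id[OF X Y] G.tensor_constraint_id[OF X Y]
      comp_id_left[OF F.category_D] comp_id_right[OF F.category_D] by simp
qed

end

section \<open>The non-strictification\<close>

lemma qcat_simps [simp]:
  "cObj (qcat C) = qObj C" "cdom (qcat C) (A, B, f) = A" "ccod (qcat C) (A, B, f) = B"
  "ccomp (qcat C) (B', E, g) (A, B, f) = (A, E, ccomp C g f)"
  "cid (qcat C) A = (A, A, cid C (Par C A))" "tensO (qcat C) = qtensO" "munit (qcat C) = ([], MU)"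
  "(A, B, f) \<in> cArr (qcat C) \<longleftrightarrow> A \<in> qObj C \<and> B \<in> qObj C \<and> f \<in> hom C (Par C A) (Par C B)"
  by (simp_all add: qcat_def)

lemma qcat_in_hom_iff:
  "(A, B, f) \<in> hom (qcat C) A' B' \<longleftrightarrow>
   A = A' \<and> B = B' \<and> A \<in> qObj C \<and> B \<in> qObj C \<and> f \<in> hom C (Par C A) (Par C B)"
  by (auto simp: hom_def)

lemma Par_jO [simp]: "Par C (jO X) = X"
  by (simp add: jO_def Par_def)

lemma snd_jO [simp]: "snd (jO X) = MB"
  by (simp add: jO_def)

lemma Par_unit [simp]: "Par C ([], MU) = munit C"
  by (simp add: Par_def)

lemma jO_in_qObj: "X \<in> cObj C \<Longrightarrow> jO X \<in> qObj C"
  by (simp add: jO_def qObj_def)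

lemma unit_in_qObj: "([], MU) \<in> qObj C"
  by (simp add: qObj_def)

lemma qtensO_in_qObj: "A \<in> qObj C \<Longrightarrow> B \<in> qObj C \<Longrightarrow> qtensO A B \<in> qObj C"
  by (auto simp: qObj_def qtensO_def mmul_def)

lemma qtensO_unit_left [simp]: "qtensO ([], MU) A = A"
  by (simp add: qtensO_def mmul_def)

lemma qtensO_unit_right: "A \<in> qObj C \<Longrightarrow> qtensO A ([], MU) = A"
  by (auto simp: qObj_def qtensO_def mmul_def)

lemma Par_qtensO:
  "A \<in> qObj C \<Longrightarrow> snd A \<noteq> MU \<Longrightarrow> snd B \<noteq> MU \<Longrightarrow>
   Par C (qtensO A B) = tensO C (Par C A) (Par C B)"
  by (auto simp: qObj_def qtensO_def mmul_def Par_def)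

lemma qObj_induct [consumes 1, case_names unit generator qtensO]:
  assumes A: "A \<in> qObj C"
    and unit: "P ([], MU)"
    and generator: "\<And>X. X \<in> cObj C \<Longrightarrow> P (jO X)"
    and qtensO: "\<And>A1 A2. A1 \<in> qObj C \<Longrightarrow> A2 \<in> qObj C \<Longrightarrow> snd A1 \<noteq> MU \<Longrightarrow> snd A2 \<noteq> MU \<Longrightarrow>
        P A1 \<Longrightarrow> P A2 \<Longrightarrow> P (qtensO A1 A2)"
  shows "P A"
proof -
  have "(S, t) \<in> qObj C \<Longrightarrow> P (S, t)" for S t
  proof (induction t arbitrary: S)
    case MU
    then show ?case
      using unit by (simp add: qObj_def)
  next
    case MB
    then obtain X where "S = [X]" "X \<in> cObj C"
      by (cases S) (auto simp: qObj_def)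
    then show ?case
      using generator by (simp add: jO_def)
  next
    case (MN t1 t2)
    let ?A1 = "(take (msize t1) S, t1)" and ?A2 = "(drop (msize t1) S, t2)"
    have "?A1 \<in> qObj C" "?A2 \<in> qObj C" "t1 \<noteq> MU" "t2 \<noteq> MU" "qtensO ?A1 ?A2 = (S, MN t1 t2)"
      using MN.prems by (auto simp: qObj_def qtensO_def mmul_def dest: in_set_takeD in_set_dropD)
    then show ?case
      using qtensO[of ?A1 ?A2] MN.IH by simp
  qed
  then show ?thesis
    using A by (cases A) simp
qed

lemma Par_in_obj:
  assumes C: "monoidal_category C" and A: "A \<in> qObj C"
  shows "Par C A \<in> cObj C"
  using A by (induction rule: qObj_induct) (simp_all add: C munit_in_obj tensO_in_obj Par_qtensO)

lemma category_qcat: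
  assumes C: "monoidal_category C"
  shows "category (qcat C)"
proof -
  note cC = monoidal_category_category[OF C]
  show ?thesis
    unfolding category_def
  proof (intro conjI ballI impI)
    fix f assume "f \<in> cArr (qcat C)"
    moreover obtain A B h where f: "f = (A, B, h)"
      by (cases f)
    ultimately have h: "h \<in> hom C (Par C A) (Par C B)" and AB: "A \<in> qObj C" "B \<in> qObj C"
      by simp_all
    show "cdom (qcat C) f \<in> cObj (qcat C)" "ccod (qcat C) f \<in> cObj (qcat C)"
      using f AB by simp_all
    show "ccomp (qcat C) f (cid (qcat C) (cdom (qcat C) f)) = f"
      "ccomp (qcat C) (cid (qcat C) (ccod (qcat C) f)) f = f"
      using f comp_id_left[OF cC h] comp_id_right[OF cC h] by simp_all
  next
    fix A assume "A \<in> cObj (qcat C)"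
    then show "cid (qcat C) A \<in> hom (qcat C) A A"
      using id_in_hom[OF cC Par_in_obj[OF C]] by (simp add: qcat_in_hom_iff)
  next
    fix f g assume "f \<in> cArr (qcat C)" "g \<in> cArr (qcat C)" "ccod (qcat C) f = cdom (qcat C) g"
    moreover obtain A B h where "f = (A, B, h)"
      by (cases f)
    moreover obtain B' E k where "g = (B', E, k)"
      by (cases g)
    ultimately show "ccomp (qcat C) g f \<in> hom (qcat C) (cdom (qcat C) f) (ccod (qcat C) g)"
      using comp_in_hom[OF cC] by (auto simp: qcat_in_hom_iff)
  next
    fix f g k assume "f \<in> cArr (qcat C)" "g \<in> cArr (qcat C)" "k \<in> cArr (qcat C)"
      "ccod (qcat C) f = cdom (qcat C) g" "ccod (qcat C) g = cdom (qcat C) k"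
    moreover obtain A B f' where "f = (A, B, f')"
      by (cases f)
    moreover obtain B' E g' where "g = (B', E, g')"
      by (cases g)
    moreover obtain E' W k' where "k = (E', W, k')"
      by (cases k)
    ultimately show "ccomp (qcat C) k (ccomp (qcat C) g f) = ccomp (qcat C) (ccomp (qcat C) k g) f"
      using comp_assoc[OF cC] by auto
  qed
qed

lemma jA_in_hom:
  "f \<in> hom C X Y \<Longrightarrow> X \<in> cObj C \<Longrightarrow> Y \<in> cObj C \<Longrightarrow> jA C f \<in> hom (qcat C) (jO X) (jO Y)"
  by (auto simp: jA_def hom_def jO_in_qObj)

lemma j\<gamma>_in_hom:
  assumes C: "monoidal_category C" and X: "X \<in> cObj C" and Y: "Y \<in> cObj C"
  shows "j\<gamma> C X Y \<in> hom (qcat C) (qtensO (jO X) (jO Y)) (jO (tensO C X Y))"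
proof -
  have "qtensO (jO X) (jO Y) \<in> qObj C" "Par C (qtensO (jO X) (jO Y)) = tensO C X Y"
    using X Y by (simp_all add: qtensO_def jO_def qObj_def mmul_def Par_def)
  then show ?thesis
    using id_in_hom[OF monoidal_category_category[OF C] tensO_in_obj[OF C X Y]]
      jO_in_qObj[OF tensO_in_obj[OF C X Y]]
    by (simp add: j\<gamma>_def qcat_in_hom_iff)
qed

lemma ju_in_hom:
  assumes C: "monoidal_category C"
  shows "ju C \<in> hom (qcat C) ([], MU) (jO (munit C))"
  using id_in_hom[OF monoidal_category_category[OF C] munit_in_obj[OF C]] jO_in_qObj[OF munit_in_obj[OF C]]
  by (simp add: ju_def qcat_in_hom_iff unit_in_qObj)

definition qcanon :: "('o, 'm, 'z) moncat_scheme \<Rightarrow> 'o qobj \<Rightarrow> ('o, 'm) qarr" where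
  "qcanon C A = (A, jO (Par C A), cid C (Par C A))"

definition qcanon_inv :: "('o, 'm, 'z) moncat_scheme \<Rightarrow> 'o qobj \<Rightarrow> ('o, 'm) qarr" where
  "qcanon_inv C A = (jO (Par C A), A, cid C (Par C A))"

lemma qcanon_in_hom:
  assumes C: "monoidal_category C" and A: "A \<in> qObj C"
  shows "qcanon C A \<in> hom (qcat C) A (jO (Par C A))"
  using A id_in_hom[OF monoidal_category_category[OF C] Par_in_obj[OF C A]] jO_in_qObj[OF Par_in_obj[OF C A]]
  by (simp add: qcanon_def qcat_in_hom_iff)

lemma qcanon_jO:
  assumes "category C" "X \<in> cObj C"
  shows "qcanon C (jO X) = jA C (cid C X)"
  using in_homD[OF id_in_hom[OF assms]] by (simp add: qcanon_def jA_def)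

lemma qcanon_unit: "qcanon C ([], MU) = ju C"
  by (simp add: qcanon_def ju_def)

lemma qcanon_qtensO:
  assumes C: "monoidal_category C" and A: "A \<in> qObj C" "B \<in> qObj C"
    and nonunit: "snd A \<noteq> MU" "snd B \<noteq> MU"
  shows "tensA (qcat C) (qcanon C A) (qcanon C B)
      \<in> hom (qcat C) (qtensO A B) (qtensO (jO (Par C A)) (jO (Par C B)))"
    and "qcanon C (qtensO A B) =
      ccomp (qcat C) (j\<gamma> C (Par C A) (Par C B)) (tensA (qcat C) (qcanon C A) (qcanon C B))"
proof -
  note cC = monoidal_category_category[OF C]
  define P where "P = tensO C (Par C A) (Par C B)"
  have objs: "Par C A \<in> cObj C" "Par C B \<in> cObj C" "P \<in> cObj C"
    using Par_in_obj[OF C] tensO_in_obj[OF C] A P_def by blast+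
  have Par_AB: "Par C (qtensO A B) = P"
    using Par_qtensO[OF A(1) nonunit] P_def by simp
  have Par_jj: "Par C (qtensO (jO (Par C A)) (jO (Par C B))) = P"
    using Par_qtensO[OF jO_in_qObj[OF objs(1)], of "jO (Par C B)"] by (simp add: P_def)
  have "tensA (qcat C) (qcanon C A) (qcanon C B)
      = (qtensO A B, qtensO (jO (Par C A)) (jO (Par C B)), cid C P)"
    using nonunit inv_arr_id[OF cC objs(3)] tensA_id[OF C objs(1,2)] comp_id_left[OF cC id_in_hom[OF cC objs(3)]]
    by (simp add: qcat_def qcanon_def qphi_def P_def)
  then show "tensA (qcat C) (qcanon C A) (qcanon C B)
      \<in> hom (qcat C) (qtensO A B) (qtensO (jO (Par C A)) (jO (Par C B)))"
    and "qcanon C (qtensO A B) =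
      ccomp (qcat C) (j\<gamma> C (Par C A) (Par C B)) (tensA (qcat C) (qcanon C A) (qcanon C B))"
    using Par_AB Par_jj id_in_hom[OF cC objs(3)] comp_id_left[OF cC id_in_hom[OF cC objs(3)]]
      qtensO_in_qObj[OF A] qtensO_in_qObj[OF jO_in_qObj[OF objs(1)] jO_in_qObj[OF objs(2)]]
    by (simp_all add: qcat_in_hom_iff qcanon_def j\<gamma>_def P_def)
qed

lemma qcanon_inverse:
  assumes C: "monoidal_category C" and A: "A \<in> qObj C"
  shows "qcanon_inv C A \<in> hom (qcat C) (jO (Par C A)) A"
    and "ccomp (qcat C) (qcanon_inv C A) (qcanon C A) = cid (qcat C) A"
    and "ccomp (qcat C) (qcanon C A) (qcanon_inv C A) = cid (qcat C) (jO (Par C A))"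
  using A jO_in_qObj[OF Par_in_obj[OF C A]] id_in_hom[OF monoidal_category_category[OF C] Par_in_obj[OF C A]]
    comp_id_left[OF monoidal_category_category[OF C]]
  by (simp_all add: qcat_in_hom_iff qcanon_def qcanon_inv_def)

lemma qcat_arr_factor:
  assumes C: "monoidal_category C" and h: "h \<in> hom C (Par C A) (Par C B)"
  shows "(A, B, h) = ccomp (qcat C) (qcanon_inv C B) (ccomp (qcat C) (jA C h) (qcanon C A))"
  using comp_id_left[OF monoidal_category_category[OF C] h]
    comp_id_right[OF monoidal_category_category[OF C] h] in_homD[OF h]
  by (simp add: qcanon_def qcanon_inv_def jA_def)

section \<open>Lifting a monoidal transformation\<close>

fun par_arr :: "('p, 'n, 'y) moncat_scheme \<Rightarrow> ('o \<Rightarrow> 'n) \<Rightarrow> mag \<Rightarrow> 'o list \<Rightarrow> 'n" where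
  "par_arr D \<alpha> MU S = cid D (munit D)"
| "par_arr D \<alpha> MB S = \<alpha> (hd S)"
| "par_arr D \<alpha> (MN t1 t2) S =
     tensA D (par_arr D \<alpha> t1 (take (msize t1) S)) (par_arr D \<alpha> t2 (drop (msize t1) S))"

definition qlift :: "('p, 'n, 'y) moncat_scheme \<Rightarrow> ('o \<Rightarrow> 'n) \<Rightarrow> 'o qobj \<Rightarrow> 'n" where
  "qlift D \<alpha> A = par_arr D \<alpha> (snd A) (fst A)"

lemma qlift_unit [simp]: "qlift D \<alpha> ([], MU) = cid D (munit D)"
  by (simp add: qlift_def)

lemma qlift_jO [simp]: "qlift D \<alpha> (jO X) = \<alpha> X"
  by (simp add: qlift_def jO_def)

lemma qlift_qtensO:
  "A \<in> qObj C \<Longrightarrow> snd A \<noteq> MU \<Longrightarrow> snd B \<noteq> MU \<Longrightarrow>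
   qlift D \<alpha> (qtensO A B) = tensA D (qlift D \<alpha> A) (qlift D \<alpha> B)"
  by (auto simp: qObj_def qtensO_def mmul_def qlift_def)

locale strict_extension =
  strict_monoidal_functor_into "qcat C" D Hho Hha Hh\<gamma> Hhu
  for C :: "('o, 'm) moncat" and D :: "('p, 'n) moncat" and Hho Hha Hh\<gamma> Hhu +
  fixes Ho :: "'o \<Rightarrow> 'p" and Ha :: "'m \<Rightarrow> 'n" and H\<gamma> :: "'o \<Rightarrow> 'o \<Rightarrow> 'n" and Hu :: 'n
  assumes monoidal_C: "monoidal_category C"
    and extends: "extends_along_j C D Hho Hha Hh\<gamma> Hhu Ho Ha H\<gamma> Hu"
begin

lemma preserves_qtensO:
  "A \<in> qObj C \<Longrightarrow> B \<in> qObj C \<Longrightarrow> Hho (qtensO A B) = tensO D (Hho A) (Hho B)"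
  using preserves_tensO by simp

lemma qtensor_constraint_id:
  "A \<in> qObj C \<Longrightarrow> B \<in> qObj C \<Longrightarrow> Hh\<gamma> A B = cid D (tensO D (Hho A) (Hho B))"
  using tensor_constraint_id by simp

lemma preserves_unit: "Hho ([], MU) = munit D"
  using preserves_munit by simp

lemma extends_jO: "X \<in> cObj C \<Longrightarrow> Hho (jO X) = Ho X"
  using extends by (simp add: extends_along_j_def)

lemma extends_jA: "f \<in> cArr C \<Longrightarrow> Hha (jA C f) = Ha f"
  using extends by (simp add: extends_along_j_def)

lemma extends_j\<gamma>:
  assumes X: "X \<in> cObj C" and Y: "Y \<in> cObj C"
  shows "Hha (j\<gamma> C X Y) = H\<gamma> X Y"
proof -
  have "Hha (j\<gamma> C X Y) \<in> hom D (tensO D (Hho (jO X)) (Hho (jO Y))) (Hho (jO (tensO C X Y)))"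
    using maps_hom[OF j\<gamma>_in_hom[OF monoidal_C X Y]] preserves_qtensO[OF jO_in_qObj[OF X] jO_in_qObj[OF Y]]
    by simp
  moreover have "ccomp D (Hha (j\<gamma> C X Y)) (Hh\<gamma> (jO X) (jO Y)) = H\<gamma> X Y"
    using extends X Y by (simp add: extends_along_j_def)
  ultimately show ?thesis
    using qtensor_constraint_id[OF jO_in_qObj[OF X] jO_in_qObj[OF Y]] comp_id_right[OF category_D] by simp
qed

lemma extends_ju: "Hha (ju C) = Hu"
proof -
  have "Hha (ju C) \<in> hom D (munit D) (Hho (jO (munit C)))"
    using maps_hom[OF ju_in_hom[OF monoidal_C]] preserves_unit by simp
  moreover have "ccomp D (Hha (ju C)) Hhu = Hu"
    using extends by (simp add: extends_along_j_def)
  ultimately show ?thesis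
    using unit_constraint_id comp_id_right[OF category_D] by simp
qed

end

locale lifting =
  F: strict_extension C D Fho Fha Fh\<gamma> Fhu Fo Fa F\<gamma> Fu +
  G: strict_extension C D Gho Gha Gh\<gamma> Ghu Go Ga G\<gamma> Gu
  for C :: "('o, 'm) moncat" and D :: "('p, 'n) moncat"
    and Fho Fha Fh\<gamma> Fhu Fo Fa F\<gamma> Fu Gho Gha Gh\<gamma> Ghu Go Ga G\<gamma> Gu +
  fixes \<alpha> :: "'o \<Rightarrow> 'n"
  assumes nonstrict_D: "nonstrict_monoidal_category D"
    and monoidal_\<alpha>: "monoidal_nat_trans C D Fo Fa F\<gamma> Fu Go Ga G\<gamma> Gu \<alpha>"
begin

sublocale strict_functor_pair "qcat C" D Fho Fha Fh\<gamma> Fhu Gho Gha Gh\<gamma> Ghu ..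

lemma lift_in_hom: "A \<in> qObj C \<Longrightarrow> qlift D \<alpha> A \<in> hom D (Fho A) (Gho A)"
proof (induction rule: qObj_induct)
  case unit
  then show ?case
    using F.preserves_unit G.preserves_unit id_in_hom[OF F.category_D munit_in_obj[OF F.monoidal_D]]
    by simp
next
  case (generator X)
  then show ?case
    using monoidal_\<alpha> F.extends_jO G.extends_jO
    by (simp add: monoidal_nat_trans_def nat_trans_def)
next
  case (qtensO A1 A2)
  then show ?case
    using qlift_qtensO[OF qtensO.hyps(1,3,4), where D = D and \<alpha> = \<alpha>]
      tensA_in_hom[OF F.monoidal_D qtensO.IH]
      F.preserves_qtensO[OF qtensO.hyps(1,2)] G.preserves_qtensO[OF qtensO.hyps(1,2)] by simp
qed

lemma lift_qtensO:
  assumes A: "A \<in> qObj C" and B: "B \<in> qObj C"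
  shows "qlift D \<alpha> (qtensO A B) = tensA D (qlift D \<alpha> A) (qlift D \<alpha> B)"
proof (cases "snd A = MU \<or> snd B = MU")
  case True
  then consider "A = ([], MU)" | "B = ([], MU)"
    using A B by (cases A, cases B) (auto simp: qObj_def)
  then show ?thesis
    using nonstrict_tensA_unit_left[OF nonstrict_D lift_in_hom[OF B]]
      nonstrict_tensA_unit_right[OF nonstrict_D lift_in_hom[OF A]]
    by cases (simp_all add: qtensO_unit_right[OF A])
next
  case False
  then show ?thesis
    using qlift_qtensO A by blast
qed

lemma natural_jA: "f \<in> cArr C \<Longrightarrow> natural_at (qcat C) D Fha Gha (qlift D \<alpha>) (jA C f)"
  using F.extends_jA[unfolded jA_def] G.extends_jA[unfolded jA_def] monoidal_\<alpha>
  by (simp add: natural_at_def jA_def monoidal_nat_trans_def nat_trans_def)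

lemma natural_j\<gamma>:
  assumes X: "X \<in> cObj C" and Y: "Y \<in> cObj C"
  shows "natural_at (qcat C) D Fha Gha (qlift D \<alpha>) (j\<gamma> C X Y)"
proof -
  have "qlift D \<alpha> (qtensO (jO X) (jO Y)) = tensA D (\<alpha> X) (\<alpha> Y)"
    using qlift_qtensO[OF jO_in_qObj[OF X], of "jO Y"] by simp
  then show ?thesis
    using F.extends_j\<gamma>[OF X Y, unfolded j\<gamma>_def] G.extends_j\<gamma>[OF X Y, unfolded j\<gamma>_def] monoidal_\<alpha> X Y
    by (simp add: natural_at_def j\<gamma>_def monoidal_nat_trans_def)
qed

lemma natural_ju: "natural_at (qcat C) D Fha Gha (qlift D \<alpha>) (ju C)"
proof -
  have "Gu \<in> hom D (munit D) (Go (munit C))"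
    using G.maps_hom[OF ju_in_hom[OF F.monoidal_C]] G.extends_ju G.preserves_unit
      G.extends_jO[OF munit_in_obj[OF F.monoidal_C]] by simp
  then show ?thesis
    using F.extends_ju[unfolded ju_def] G.extends_ju[unfolded ju_def] monoidal_\<alpha>
      comp_id_right[OF F.category_D]
    by (simp add: natural_at_def ju_def monoidal_nat_trans_def)
qed

lemma lift_component: "A \<in> cObj (qcat C) \<Longrightarrow> qlift D \<alpha> A \<in> hom D (Fho A) (Gho A)"
  using lift_in_hom by simp

lemma natural_qcanon: "A \<in> qObj C \<Longrightarrow> natural_at (qcat C) D Fha Gha (qlift D \<alpha>) (qcanon C A)"
proof (induction rule: qObj_induct)
  case unit
  then show ?case
    using natural_ju by (simp add: qcanon_unit)
next
  case (generator X)
  then show ?case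
    using natural_jA[of "cid C X"] qcanon_jO[OF monoidal_category_category[OF F.monoidal_C]]
      in_homD[OF id_in_hom[OF monoidal_category_category[OF F.monoidal_C]]] by simp
next
  case (qtensO A1 A2)
  note C = F.monoidal_C
  define P1 where "P1 = Par C A1"
  define P2 where "P2 = Par C A2"
  have P: "P1 \<in> cObj C" "P2 \<in> cObj C"
    using Par_in_obj[OF C] qtensO.hyps P1_def P2_def by blast+
  note jP = jO_in_qObj[OF P(1)] jO_in_qObj[OF P(2)]
  have c1: "qcanon C A1 \<in> hom (qcat C) A1 (jO P1)" and c2: "qcanon C A2 \<in> hom (qcat C) A2 (jO P2)"
    using qcanon_in_hom[OF C] qtensO.hyps P1_def P2_def by blast+
  have c12: "tensA (qcat C) (qcanon C A1) (qcanon C A2)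
      \<in> hom (qcat C) (qtensO A1 A2) (qtensO (jO P1) (jO P2))"
    using qcanon_qtensO(1)[OF C qtensO.hyps] P1_def P2_def by simp
  have "natural_at (qcat C) D Fha Gha (qlift D \<alpha>) (tensA (qcat C) (qcanon C A1) (qcanon C A2))"
    by (rule natural_at_tensA[OF c1 c2])
      (simp_all add: c12 lift_in_hom qtensO.hyps jP qtensO.IH lift_qtensO del: qlift_jO)
  then show ?case
    using natural_at_comp[OF lift_component c12 j\<gamma>_in_hom[OF C P]] natural_j\<gamma>[OF P]
      qcanon_qtensO(2)[OF C qtensO.hyps] P1_def P2_def by simp
qed

lemma natural_qcat: "f \<in> cArr (qcat C) \<Longrightarrow> natural_at (qcat C) D Fha Gha (qlift D \<alpha>) f"
proof -
  assume "f \<in> cArr (qcat C)"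
  then obtain A B h where f: "f = (A, B, h)" and A: "A \<in> qObj C" and B: "B \<in> qObj C"
    and h: "h \<in> hom C (Par C A) (Par C B)"
    by (cases f) auto
  note C = F.monoidal_C
  note PA = Par_in_obj[OF C A] and PB = Par_in_obj[OF C B]
  have jh: "jA C h \<in> hom (qcat C) (jO (Par C A)) (jO (Par C B))"
    using jA_in_hom[OF h PA PB] .
  have "natural_at (qcat C) D Fha Gha (qlift D \<alpha>) (ccomp (qcat C) (jA C h) (qcanon C A))"
    using natural_at_comp[OF lift_component qcanon_in_hom[OF C A] jh] natural_qcanon[OF A]
      natural_jA in_homD[OF h] by simp
  moreover have "natural_at (qcat C) D Fha Gha (qlift D \<alpha>) (qcanon_inv C B)"
    using natural_at_inverse[OF lift_component qcanon_in_hom[OF C B] qcanon_inverse[OF C B]]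
      natural_qcanon[OF B] by simp
  ultimately show ?thesis
    using natural_at_comp[OF lift_component comp_in_hom[OF category_qcat[OF C] qcanon_in_hom[OF C A] jh]
        qcanon_inverse(1)[OF C B]]
      qcat_arr_factor[OF C h] f by simp
qed

lemma monoidal_nat_trans_lift:
  "monoidal_nat_trans (qcat C) D Fho Fha Fh\<gamma> Fhu Gho Gha Gh\<gamma> Ghu (qlift D \<alpha>)"
  by (rule monoidal_nat_transI) (simp_all add: lift_in_hom natural_qcat lift_qtensO)

lemma lift_unique:
  assumes \<beta>: "monoidal_nat_trans (qcat C) D Fho Fha Fh\<gamma> Fhu Gho Gha Gh\<gamma> Ghu \<beta>"
    and \<beta>_j: "\<And>X. X \<in> cObj C \<Longrightarrow> \<beta> (jO X) = \<alpha> X"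
    and A: "A \<in> qObj C"
  shows "\<beta> A = qlift D \<alpha> A"
  using A
proof (induction rule: qObj_induct)
  case unit
  then show ?case
    using monoidal_nat_trans_munit[OF \<beta>] unit_in_qObj[of C] by simp
next
  case (generator X)
  then show ?case
    using \<beta>_j by simp
next
  case (qtensO A1 A2)
  then show ?case
    using monoidal_nat_trans_tensO[OF \<beta>, of A1 A2] qtensO_in_qObj[OF qtensO.hyps(1,2)]
      lift_qtensO[OF qtensO.hyps(1,2)] by simp
qed

end

theorem mainTheorem8:
  fixes C :: "('o, 'm) moncat" and D :: "('p, 'n) moncat"
    and Fo Go :: "'o \<Rightarrow> 'p" and Fa Ga :: "'m \<Rightarrow> 'n"
    and F\<gamma> G\<gamma> :: "'o \<Rightarrow> 'o \<Rightarrow> 'n" and Fu Gu :: 'n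
    and Fho Gho :: "'o qobj \<Rightarrow> 'p" and Fha Gha :: "('o, 'm) qarr \<Rightarrow> 'n"
    and Fh\<gamma> Gh\<gamma> :: "'o qobj \<Rightarrow> 'o qobj \<Rightarrow> 'n" and Fhu Ghu :: 'n
    and \<alpha> :: "'o \<Rightarrow> 'n"
  assumes "monoidal_category C"
    and "nonstrict_monoidal_category D"
    and "strong_monoidal_functor C D Fo Fa F\<gamma> Fu"
    and "strong_monoidal_functor C D Go Ga G\<gamma> Gu"
    and "strict_monoidal_functor (qcat C) D Fho Fha Fh\<gamma> Fhu"
    and "extends_along_j C D Fho Fha Fh\<gamma> Fhu Fo Fa F\<gamma> Fu"
    and "strict_monoidal_functor (qcat C) D Gho Gha Gh\<gamma> Ghu"
    and "extends_along_j C D Gho Gha Gh\<gamma> Ghu Go Ga G\<gamma> Gu"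
    and "monoidal_nat_trans C D Fo Fa F\<gamma> Fu Go Ga G\<gamma> Gu \<alpha>"
  shows "\<exists>\<alpha>h. monoidal_nat_trans (qcat C) D Fho Fha Fh\<gamma> Fhu Gho Gha Gh\<gamma> Ghu \<alpha>h \<and>
              (\<forall>X \<in> cObj C. \<alpha>h (jO X) = \<alpha> X) \<and>
              (\<forall>\<beta>. monoidal_nat_trans (qcat C) D Fho Fha Fh\<gamma> Fhu Gho Gha Gh\<gamma> Ghu \<beta> \<and>
                    (\<forall>X \<in> cObj C. \<beta> (jO X) = \<alpha> X) \<longrightarrow>
                    (\<forall>A \<in> cObj (qcat C). \<beta> A = \<alpha>h A))"
proof -
  have "monoidal_category D"
    using assms(2) unfolding nonstrict_monoidal_category_def by blast
  then interpret lifting C D Fho Fha Fh\<gamma> Fhu Fo Fa F\<gamma> Fu Gho Gha Gh\<gamma> Ghu Go Ga G\<gamma> Gu \<alpha>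
    using assms category_qcat[OF assms(1)]
    by unfold_locales
  show ?thesis
  proof (intro exI conjI allI impI ballI)
    show "monoidal_nat_trans (qcat C) D Fho Fha Fh\<gamma> Fhu Gho Gha Gh\<gamma> Ghu (qlift D \<alpha>)"
      by (rule monoidal_nat_trans_lift)
  next
    show "qlift D \<alpha> (jO X) = \<alpha> X" for X
      by simp
  next
    fix \<beta> A
    assume "monoidal_nat_trans (qcat C) D Fho Fha Fh\<gamma> Fhu Gho Gha Gh\<gamma> Ghu \<beta> \<and>
      (\<forall>X \<in> cObj C. \<beta> (jO X) = \<alpha> X)" and "A \<in> cObj (qcat C)"
    then show "\<beta> A = qlift D \<alpha> A"
      using lift_unique by simp
  qed
qed

end
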